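(* Let $X$ be a $d$-dimensional clique complex, $3d_1\le d-2$, $X$ $d_1$-well-connected, and $\nu:\widetilde{F^{d_1}X}\to F^{d_1}X$ an $\ell$-covering map. For a face $r\in X$ let $Z_r=\nu^{-1}(F^{d_1}X_r)\subseteq\widetilde{F^{d_1}X}$ (the induced subcomplex on the preimage of the vertices of $F^{d_1}(X_r)$). Then: (1) for every nonempty $r\in X$ of dimension $\le d_1$, $Z_r$ has exactly $\ell$ connected components $Z_r^1,\dots,Z_r^\ell$, and $\nu$ restricted to each $Z_r^i$ is an isomorphism onto $F^{d_1}X_r$; (2) for all nonempty $r\subseteq s$ of dimension $\le d_1$ there is a permutation $\pi_{r,s}$ of $[\ell]$ such that $Z_s^i\subseteq Z_r^j$ if and only if $\pi_{r,s}(i)=j$.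
   Context: $X(i)$ = faces with $i+1$ vertices; link $X_r=\{t\setminus r:r\subseteq t\in X\}$. Clique complex: every set of pairwise adjacent vertices is a face. Faces complex $F^{d_1}X$: vertex set $X(d_1)$, faces the sets of pairwise disjoint $d_1$-faces whose union is in $X$; $F^{d_1}X_r:=F^{d_1}(X_r)$, viewed as a subcomplex of $F^{d_1}X$ (a vertex $s$ of it corresponds to $s\in X(d_1)$ with $s\cap r=\emptyset$, $s\cup r\in X$). Covering map: a surjective simplicial homomorphism on vertices that restricts to an isomorphism between the link of each vertex and the link of its image; $\ell$-cover if each vertex has $\ell$ preimages. Simply connected: connected, and every $\ell$-cover is a disjoint union of $\ell$ components each mapped isomorphically. $d_1$-well-connected: for every face $r$ of dimension $\le d_1$ (including $\emptyset$) $F^{d_1}(X_r)$ is connected, and for every vertex $r$ it is simply connected. *)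

theory Defs
  imports Main
begin

definition simplicial_complex :: "'v set set \<Rightarrow> bool" where
  "simplicial_complex X \<longleftrightarrow> (\<forall>t\<in>X. finite t) \<and> (\<forall>t\<in>X. \<forall>u. u \<subseteq> t \<longrightarrow> u \<in> X)"

definition vertices :: "'v set set \<Rightarrow> 'v set" where
  "vertices X = \<Union>X"

definition has_dim :: "'v set set \<Rightarrow> nat \<Rightarrow> bool" where
  "has_dim X d \<longleftrightarrow> (\<forall>t\<in>X. card t \<le> d + 1) \<and> (\<exists>t\<in>X. card t = d + 1)"

definition clique_complex :: "'v set set \<Rightarrow> bool" where
  "clique_complex X \<longleftrightarrow> simplicial_complex X \<and>
     (\<forall>t. finite t \<longrightarrow> (\<forall>v\<in>t. {v} \<in> X) \<longrightarrow> (\<forall>u\<in>t. \<forall>v\<in>t. u \<noteq> v \<longrightarrow> {u, v} \<in> X) \<longrightarrow> t \<in> X)"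

definition link :: "'v set set \<Rightarrow> 'v set \<Rightarrow> 'v set set" where
  "link X r = {t - r | t. r \<subseteq> t \<and> t \<in> X}"

definition faces_complex :: "nat \<Rightarrow> 'v set set \<Rightarrow> 'v set set set" where
  "faces_complex d1 X = {S. finite S \<and> (\<forall>s\<in>S. s \<in> X \<and> card s = d1 + 1) \<and>
      (\<forall>s\<in>S. \<forall>s'\<in>S. s \<noteq> s' \<longrightarrow> s \<inter> s' = {}) \<and> \<Union>S \<in> X}"

definition induced :: "'v set set \<Rightarrow> 'v set \<Rightarrow> 'v set set" where
  "induced K S = {t \<in> K. t \<subseteq> S}"

definition cx_iso :: "('b \<Rightarrow> 'v) \<Rightarrow> 'b set set \<Rightarrow> 'v set set \<Rightarrow> bool" where
  "cx_iso f A B \<longleftrightarrow> inj_on f (vertices A) \<and> bij_betw (\<lambda>t. f ` t) A B"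

definition covering_map :: "'b set set \<Rightarrow> 'v set set \<Rightarrow> ('b \<Rightarrow> 'v) \<Rightarrow> bool" where
  "covering_map Y K f \<longleftrightarrow> simplicial_complex Y \<and> simplicial_complex K \<and>
     (\<forall>t\<in>Y. f ` t \<in> K) \<and> f ` vertices Y = vertices K \<and>
     (\<forall>y\<in>vertices Y. cx_iso f (link Y {y}) (link K {f y}))"

definition l_cover :: "'b set set \<Rightarrow> 'v set set \<Rightarrow> ('b \<Rightarrow> 'v) \<Rightarrow> nat \<Rightarrow> bool" where
  "l_cover Y K f l \<longleftrightarrow> covering_map Y K f \<and>
     (\<forall>v\<in>vertices K. finite {y \<in> vertices Y. f y = v} \<and> card {y \<in> vertices Y. f y = v} = l)"

definition adj :: "'v set set \<Rightarrow> 'v \<Rightarrow> 'v \<Rightarrow> bool" where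
  "adj K u v \<longleftrightarrow> u \<noteq> v \<and> {u, v} \<in> K"

definition cx_connected :: "'v set set \<Rightarrow> bool" where
  "cx_connected K \<longleftrightarrow> vertices K \<noteq> {} \<and> (\<forall>u\<in>vertices K. \<forall>v\<in>vertices K. (adj K)\<^sup>*\<^sup>* u v)"

definition components :: "'v set set \<Rightarrow> 'v set set" where
  "components K = {{w \<in> vertices K. (adj K)\<^sup>*\<^sup>* v w} | v. v \<in> vertices K}"

text \<open>Covering complexes are taken with vertex type 'v \<times> nat,
which is no loss of generality (every l-cover is isomorphic to one of this type).\<close>
definition simply_connected :: "'v set set \<Rightarrow> bool" where
  "simply_connected K \<longleftrightarrow> cx_connected K \<and>
     (\<forall>(Y :: ('v \<times> nat) set set) f l. l_cover Y K f l \<longrightarrow>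
        finite (components Y) \<and> card (components Y) = l \<and>
        (\<forall>C\<in>components Y. cx_iso f (induced Y C) K))"

definition well_connected :: "nat \<Rightarrow> 'v set set \<Rightarrow> bool" where
  "well_connected d1 X \<longleftrightarrow>
     (\<forall>r\<in>X. card r \<le> d1 + 1 \<longrightarrow> cx_connected (faces_complex d1 (link X r))) \<and>
     (\<forall>v. {v} \<in> X \<longrightarrow> simply_connected (faces_complex d1 (link X {v})))"

end

theory Submission
  imports Defs
begin

text \<open>Covering maps restrict to covering maps over induced subcomplexes. For a vertex \<open>v\<close> of
  \<open>r\<close>, the preimage of \<open>F\<^sup>d\<^sup>1X\<^sub>v\<close> is an \<open>l\<close>-cover of this simply connected complex, hence
  splits into \<open>l\<close> sheets, each mapped isomorphically. As \<open>X\<close> is a clique complex,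
  \<open>F\<^sup>d\<^sup>1X\<^sub>r\<close> is the subcomplex of \<open>F\<^sup>d\<^sup>1X\<^sub>v\<close> induced on its own vertices, so cutting each
  sheet down to the preimage of these vertices yields \<open>l\<close> pieces isomorphic to the connected
  complex \<open>F\<^sup>d\<^sup>1X\<^sub>r\<close>: these are the components of \<open>Z\<^sub>r\<close>. Repeating the argument from \<open>r\<close>
  to \<open>s \<supseteq> r\<close>, the map \<open>C \<mapsto> C \<inter> Z\<^sub>s\<close> is a bijection between the components of \<open>Z\<^sub>r\<close> and
  of \<open>Z\<^sub>s\<close>, and a component of \<open>Z\<^sub>s\<close> lies in a component \<open>C\<close> of \<open>Z\<^sub>r\<close> exactly when it is
  \<open>C \<inter> Z\<^sub>s\<close>; this bijection is \<open>\<pi>\<^sub>r\<^sub>,\<^sub>s\<close>.\<close>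

section \<open>Simplicial complexes, links and components\<close>

lemma simplicial_complex_subset: "simplicial_complex K \<Longrightarrow> t \<in> K \<Longrightarrow> u \<subseteq> t \<Longrightarrow> u \<in> K"
  unfolding simplicial_complex_def by blast

lemma simplicial_complex_finite: "simplicial_complex K \<Longrightarrow> t \<in> K \<Longrightarrow> finite t"
  unfolding simplicial_complex_def by blast

lemma face_subset_vertices: "t \<in> K \<Longrightarrow> t \<subseteq> vertices K"
  unfolding vertices_def by blast

lemma singleton_face:
  assumes "simplicial_complex K" "v \<in> vertices K"
  shows "{v} \<in> K"
proof -
  obtain t where "t \<in> K" "v \<in> t" using assms(2) unfolding vertices_def by blast
  then show ?thesis using simplicial_complex_subset[OF assms(1)] by blast
qed

lemma simplicial_complex_induced: "simplicial_complex K \<Longrightarrow> simplicial_complex (induced K S)"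
  unfolding simplicial_complex_def induced_def by blast

lemma induced_subset: "induced K S \<subseteq> K"
  unfolding induced_def by blast

lemma induced_induced [simp]: "induced (induced K A) B = induced K (A \<inter> B)"
  unfolding induced_def by blast

lemma vertices_induced:
  assumes "simplicial_complex K"
  shows "vertices (induced K S) = S \<inter> vertices K"
proof
  show "vertices (induced K S) \<subseteq> S \<inter> vertices K"
    unfolding vertices_def induced_def by blast
  show "S \<inter> vertices K \<subseteq> vertices (induced K S)"
  proof
    fix v assume "v \<in> S \<inter> vertices K"
    then have "{v} \<in> induced K S" using singleton_face[OF assms] unfolding induced_def by blast
    then show "v \<in> vertices (induced K S)" unfolding vertices_def by blast
  qed
qed

lemma link_eq_image: "link X r = (\<lambda>t. t - r) ` {t \<in> X. r \<subseteq> t}"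
  unfolding link_def by blast

lemma vertices_link_subset: "vertices (link Y {y}) \<subseteq> vertices Y"
  unfolding vertices_def link_def by blast

lemma link_induced:
  assumes "y \<in> S"
  shows "link (induced Y S) {y} = induced (link Y {y}) S"
  unfolding link_def induced_def using assms by blast

lemma symp_adj: "symp (adj K)"
  unfolding adj_def by (auto intro: sympI simp: insert_commute)

lemma adj_vertices: "adj K a b \<Longrightarrow> a \<in> vertices K \<and> b \<in> vertices K"
  unfolding adj_def vertices_def by blast

lemma adj_mono: "K' \<subseteq> K \<Longrightarrow> adj K' a b \<Longrightarrow> adj K a b"
  unfolding adj_def by blast

lemma rtranclp_adj_sym: "(adj K)\<^sup>*\<^sup>* a b \<Longrightarrow> (adj K)\<^sup>*\<^sup>* b a"
  by (rule sympD[OF symp_rtranclp[OF symp_adj]])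

lemma rtranclp_adj_mono: "K' \<subseteq> K \<Longrightarrow> (adj K')\<^sup>*\<^sup>* a b \<Longrightarrow> (adj K)\<^sup>*\<^sup>* a b"
  by (metis adj_mono mono_rtranclp)

lemma rtranclp_map_on:
  assumes "R\<^sup>*\<^sup>* a b" "a \<in> A"
    and "\<And>x y. x \<in> A \<Longrightarrow> R x y \<Longrightarrow> y \<in> A \<and> S (g x) (g y)"
  shows "b \<in> A \<and> S\<^sup>*\<^sup>* (g a) (g b)"
  using assms(1)
proof (induction rule: rtranclp_induct)
  case base
  then show ?case using assms(2) by simp
next
  case (step y z)
  then show ?case using assms(3) by (meson rtranclp.rtrancl_into_rtrancl)
qed

lemma components_subset_vertices: "C \<in> components K \<Longrightarrow> C \<subseteq> vertices K"
  unfolding components_def by auto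

lemma components_nonempty: "C \<in> components K \<Longrightarrow> C \<noteq> {}"
  unfolding components_def by auto

lemma components_cover: "v \<in> vertices K \<Longrightarrow> \<exists>C\<in>components K. v \<in> C"
  unfolding components_def by auto

lemma components_disjoint:
  assumes "C \<in> components K" "C' \<in> components K" "x \<in> C" "x \<in> C'"
  shows "C = C'"
proof -
  obtain v v' where C: "C = {w \<in> vertices K. (adj K)\<^sup>*\<^sup>* v w}"
    and C': "C' = {w \<in> vertices K. (adj K)\<^sup>*\<^sup>* v' w}"
    using assms(1,2) unfolding components_def by auto
  have "(adj K)\<^sup>*\<^sup>* v x" "(adj K)\<^sup>*\<^sup>* v' x" using assms(3,4) unfolding C C' by simp_all
  then have "(adj K)\<^sup>*\<^sup>* v v'" "(adj K)\<^sup>*\<^sup>* v' v"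
    by (auto intro: rtranclp_trans[OF _ rtranclp_adj_sym])
  then have "(adj K)\<^sup>*\<^sup>* v w \<longleftrightarrow> (adj K)\<^sup>*\<^sup>* v' w" for w
    by (auto intro: rtranclp_trans)
  then show ?thesis unfolding C C' by simp
qed

lemma components_closed:
  assumes "C \<in> components K" "a \<in> C" "adj K a b"
  shows "b \<in> C"
proof -
  obtain v where C: "C = {w \<in> vertices K. (adj K)\<^sup>*\<^sup>* v w}"
    using assms(1) unfolding components_def by auto
  have "(adj K)\<^sup>*\<^sup>* v b"
    using assms(2,3) unfolding C by (auto intro: rtranclp.rtrancl_into_rtrancl)
  then show ?thesis unfolding C using adj_vertices[OF assms(3)] by simp
qed

lemma components_eqI:
  assumes nonempty: "\<And>A. A \<in> P \<Longrightarrow> A \<noteq> {} \<and> A \<subseteq> vertices K"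
    and cover: "\<And>v. v \<in> vertices K \<Longrightarrow> \<exists>A\<in>P. v \<in> A"
    and connected: "\<And>A a b. A \<in> P \<Longrightarrow> a \<in> A \<Longrightarrow> b \<in> A \<Longrightarrow> (adj K)\<^sup>*\<^sup>* a b"
    and closed: "\<And>A a b. A \<in> P \<Longrightarrow> a \<in> A \<Longrightarrow> adj K a b \<Longrightarrow> b \<in> A"
  shows "components K = P"
proof -
  have eq_class: "{w \<in> vertices K. (adj K)\<^sup>*\<^sup>* v w} = A" if A: "A \<in> P" "v \<in> A" for A v
  proof
    show "A \<subseteq> {w \<in> vertices K. (adj K)\<^sup>*\<^sup>* v w}"
      using connected[OF A] nonempty[OF A(1)] by auto
    show "{w \<in> vertices K. (adj K)\<^sup>*\<^sup>* v w} \<subseteq> A"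
    proof
      fix w assume "w \<in> {w \<in> vertices K. (adj K)\<^sup>*\<^sup>* v w}"
      then have "(adj K)\<^sup>*\<^sup>* v w" by simp
      have "w \<in> A \<and> (adj K)\<^sup>*\<^sup>* (id v) (id w)"
        by (rule rtranclp_map_on[OF \<open>(adj K)\<^sup>*\<^sup>* v w\<close> A(2)]) (simp add: closed[OF A(1)])
      then show "w \<in> A" ..
    qed
  qed
  show ?thesis
  proof
    show "components K \<subseteq> P"
    proof
      fix C assume "C \<in> components K"
      then obtain v where v: "v \<in> vertices K" "C = {w \<in> vertices K. (adj K)\<^sup>*\<^sup>* v w}"
        unfolding components_def by auto
      obtain A where "A \<in> P" "v \<in> A" using cover[OF v(1)] by blast
      then show "C \<in> P" using eq_class v(2) by simp
    qed
    show "P \<subseteq> components K"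
    proof
      fix A assume "A \<in> P"
      then obtain v where "v \<in> A" "v \<in> vertices K" using nonempty by blast
      then show "A \<in> components K"
        unfolding components_def using eq_class[OF \<open>A \<in> P\<close>] by auto
    qed
  qed
qed

lemma components_induced:
  assumes sc: "simplicial_complex Z"
    and con: "\<And>C. C \<in> components Z \<Longrightarrow> cx_connected (induced Z (C \<inter> P))"
  shows "components (induced Z P) = (\<lambda>C. C \<inter> P) ` components Z"
    and "inj_on (\<lambda>C. C \<inter> P) (components Z)"
proof -
  have vC: "vertices (induced Z (C \<inter> P)) = C \<inter> P" if C: "C \<in> components Z" for C
    using vertices_induced[OF sc] components_subset_vertices[OF C] by blast
  have nonempty: "C \<inter> P \<noteq> {}" if C: "C \<in> components Z" for C
    using con[OF C] unfolding cx_connected_def vC[OF C] by blast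
  have vP: "vertices (induced Z P) = P \<inter> vertices Z" by (rule vertices_induced[OF sc])
  show "components (induced Z P) = (\<lambda>C. C \<inter> P) ` components Z"
  proof (rule components_eqI)
    fix A assume "A \<in> (\<lambda>C. C \<inter> P) ` components Z"
    then obtain C where C: "C \<in> components Z" "A = C \<inter> P" by blast
    then show "A \<noteq> {} \<and> A \<subseteq> vertices (induced Z P)"
      using nonempty[OF C(1)] components_subset_vertices[OF C(1)] unfolding vP by blast
  next
    fix v assume "v \<in> vertices (induced Z P)"
    then have v: "v \<in> vertices Z" "v \<in> P" unfolding vP by blast+
    obtain C where C: "C \<in> components Z" "v \<in> C" using components_cover[OF v(1)] by blast
    then have "C \<inter> P \<in> (\<lambda>C. C \<inter> P) ` components Z" "v \<in> C \<inter> P" using v(2) by simp_all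
    then show "\<exists>A\<in>(\<lambda>C. C \<inter> P) ` components Z. v \<in> A" by (rule bexI[rotated])
  next
    fix A a b assume A: "A \<in> (\<lambda>C. C \<inter> P) ` components Z" and ab: "a \<in> A" "b \<in> A"
    then obtain C where C: "C \<in> components Z" "A = C \<inter> P" by blast
    have "(adj (induced Z (C \<inter> P)))\<^sup>*\<^sup>* a b"
      using con[OF C(1)] ab unfolding cx_connected_def vC[OF C(1)] C(2) by blast
    moreover have "induced Z (C \<inter> P) \<subseteq> induced Z P" unfolding induced_def by blast
    ultimately show "(adj (induced Z P))\<^sup>*\<^sup>* a b" by (rule rtranclp_adj_mono[rotated])
  next
    fix A a b assume A: "A \<in> (\<lambda>C. C \<inter> P) ` components Z" and a: "a \<in> A"
      and ab: "adj (induced Z P) a b"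
    then obtain C where C: "C \<in> components Z" "A = C \<inter> P" by blast
    have "a \<in> C" using a C(2) by blast
    then have "b \<in> C" by (rule components_closed[OF C(1) _ adj_mono[OF induced_subset ab]])
    moreover have "b \<in> P" using adj_vertices[OF ab] unfolding vP by blast
    ultimately show "b \<in> A" using C(2) by blast
  qed
  show "inj_on (\<lambda>C. C \<inter> P) (components Z)"
  proof (rule inj_onI)
    fix C C' assume C: "C \<in> components Z" "C' \<in> components Z" "C \<inter> P = C' \<inter> P"
    then obtain x where "x \<in> C" "x \<in> C'" using nonempty by blast
    then show "C = C'" by (rule components_disjoint[OF C(1,2)])
  qed
qed

section \<open>Simplicial isomorphisms\<close>

lemma cx_iso_vertices:
  assumes "cx_iso f A B"
  shows "f ` vertices A = vertices B"
proof -
  have "(`) f ` A = B" using assms unfolding cx_iso_def bij_betw_def by blast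
  then show ?thesis unfolding vertices_def by blast
qed

lemma cx_iso_adj_iff:
  assumes iso: "cx_iso f A B" and a: "a \<in> vertices A" and b: "b \<in> vertices A"
  shows "adj B (f a) (f b) \<longleftrightarrow> adj A a b"
proof -
  have inj: "inj_on f (vertices A)" and img: "(`) f ` A = B"
    using iso unfolding cx_iso_def bij_betw_def by blast+
  have "f a \<noteq> f b \<longleftrightarrow> a \<noteq> b" using inj a b by (metis inj_onD)
  moreover have "{f a, f b} \<in> B \<longleftrightarrow> {a, b} \<in> A"
  proof
    assume "{f a, f b} \<in> B"
    then obtain t where t: "t \<in> A" "f ` t = f ` {a, b}" using img by auto
    have "{a, b} \<subseteq> vertices A" using a b by blast
    with t have "t = {a, b}"
      using inj_on_image_eq_iff[OF inj face_subset_vertices[OF t(1)]] by blast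
    then show "{a, b} \<in> A" using t(1) by simp
  next
    assume "{a, b} \<in> A"
    then have "f ` {a, b} \<in> (`) f ` A" by (rule imageI)
    then show "{f a, f b} \<in> B" using img by simp
  qed
  ultimately show ?thesis unfolding adj_def by simp
qed

lemma cx_iso_rtranclp_adj:
  assumes iso: "cx_iso f A B" and a: "a \<in> vertices A" and path: "(adj B)\<^sup>*\<^sup>* (f a) w"
  shows "\<exists>b\<in>vertices A. w = f b \<and> (adj A)\<^sup>*\<^sup>* a b"
proof -
  let ?g = "inv_into (vertices A) f"
  have inj: "inj_on f (vertices A)" using iso unfolding cx_iso_def by blast
  have fv: "f ` vertices A = vertices B" by (rule cx_iso_vertices[OF iso])
  have "w \<in> vertices B \<and> (adj A)\<^sup>*\<^sup>* (?g (f a)) (?g w)"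
  proof (rule rtranclp_map_on[OF path])
    show "f a \<in> vertices B" using a fv by blast
  next
    fix x y assume x: "x \<in> vertices B" and xy: "adj B x y"
    have y: "y \<in> vertices B" using adj_vertices[OF xy] by blast
    have "adj B (f (?g x)) (f (?g y))" using x y xy fv by (simp add: f_inv_into_f)
    moreover have "?g x \<in> vertices A" "?g y \<in> vertices A" using x y fv by (auto intro: inv_into_into)
    ultimately show "y \<in> vertices B \<and> adj A (?g x) (?g y)"
      using cx_iso_adj_iff[OF iso] y by blast
  qed
  then show ?thesis
    using a inj fv by (metis f_inv_into_f inv_into_f_f inv_into_into)
qed

lemma cx_iso_connected:
  assumes iso: "cx_iso f A B" and con: "cx_connected B"
  shows "cx_connected A"
  unfolding cx_connected_def
proof (intro conjI ballI)
  have fv: "f ` vertices A = vertices B" by (rule cx_iso_vertices[OF iso])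
  then show "vertices A \<noteq> {}" using con unfolding cx_connected_def by blast
  fix a b assume a: "a \<in> vertices A" and b: "b \<in> vertices A"
  have "(adj B)\<^sup>*\<^sup>* (f a) (f b)" using con a b fv unfolding cx_connected_def by blast
  then obtain b' where "b' \<in> vertices A" "f b = f b'" "(adj A)\<^sup>*\<^sup>* a b'"
    using cx_iso_rtranclp_adj[OF iso a] by blast
  moreover have "inj_on f (vertices A)" using iso unfolding cx_iso_def by blast
  ultimately show "(adj A)\<^sup>*\<^sup>* a b" using b by (metis inj_onD)
qed

lemma cx_iso_components:
  assumes iso: "cx_iso f A B"
  shows "components B = (`) f ` components A"
proof -
  have fv: "f ` vertices A = vertices B" by (rule cx_iso_vertices[OF iso])
  have component_image:
    "{w \<in> vertices B. (adj B)\<^sup>*\<^sup>* (f a) w} = f ` {b \<in> vertices A. (adj A)\<^sup>*\<^sup>* a b}"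
    if a: "a \<in> vertices A" for a
  proof
    show "{w \<in> vertices B. (adj B)\<^sup>*\<^sup>* (f a) w} \<subseteq> f ` {b \<in> vertices A. (adj A)\<^sup>*\<^sup>* a b}"
    proof
      fix w assume "w \<in> {w \<in> vertices B. (adj B)\<^sup>*\<^sup>* (f a) w}"
      then obtain b where "b \<in> vertices A" "w = f b" "(adj A)\<^sup>*\<^sup>* a b"
        using cx_iso_rtranclp_adj[OF iso a] by auto
      then show "w \<in> f ` {b \<in> vertices A. (adj A)\<^sup>*\<^sup>* a b}" by auto
    qed
    show "f ` {b \<in> vertices A. (adj A)\<^sup>*\<^sup>* a b} \<subseteq> {w \<in> vertices B. (adj B)\<^sup>*\<^sup>* (f a) w}"
    proof
      fix w assume "w \<in> f ` {b \<in> vertices A. (adj A)\<^sup>*\<^sup>* a b}"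
      then obtain b where b: "w = f b" and path: "(adj A)\<^sup>*\<^sup>* a b" by auto
      have "b \<in> vertices A \<and> (adj B)\<^sup>*\<^sup>* (f a) (f b)"
      proof (rule rtranclp_map_on[OF path a])
        fix x y assume "x \<in> vertices A" "adj A x y"
        moreover from \<open>adj A x y\<close> have "y \<in> vertices A" by (simp add: adj_vertices)
        ultimately show "y \<in> vertices A \<and> adj B (f x) (f y)" using cx_iso_adj_iff[OF iso] by simp
      qed
      then show "w \<in> {w \<in> vertices B. (adj B)\<^sup>*\<^sup>* (f a) w}" using b fv by auto
    qed
  qed
  have "components B = {{w \<in> vertices B. (adj B)\<^sup>*\<^sup>* (f a) w} | a. a \<in> vertices A}"
    unfolding components_def fv[symmetric] by auto
  also have "\<dots> = {f ` {b \<in> vertices A. (adj A)\<^sup>*\<^sup>* a b} | a. a \<in> vertices A}"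
    using component_image by auto
  also have "\<dots> = (`) f ` components A"
    unfolding components_def by auto
  finally show ?thesis .
qed

lemma cx_iso_cong:
  assumes "\<And>x. x \<in> vertices A \<Longrightarrow> f x = g x"
  shows "cx_iso f A B \<longleftrightarrow> cx_iso g A B"
proof -
  have "inj_on f (vertices A) \<longleftrightarrow> inj_on g (vertices A)" using assms by (rule inj_on_cong)
  moreover have "bij_betw ((`) f) A B \<longleftrightarrow> bij_betw ((`) g) A B"
    using assms face_subset_vertices by (intro bij_betw_cong image_cong) blast+
  ultimately show ?thesis unfolding cx_iso_def by blast
qed

lemma cx_iso_comp_iff:
  assumes h: "cx_iso h A A'"
  shows "cx_iso g A' B \<longleftrightarrow> cx_iso (g \<circ> h) A B"
proof -
  have inj: "inj_on h (vertices A)" and bij: "bij_betw ((`) h) A A'"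
    using h unfolding cx_iso_def by blast+
  have "inj_on g (vertices A') \<longleftrightarrow> inj_on (g \<circ> h) (vertices A)"
    using comp_inj_on_iff[OF inj] cx_iso_vertices[OF h] by simp
  moreover have "bij_betw ((`) g) A' B \<longleftrightarrow> bij_betw ((`) (g \<circ> h)) A B"
  proof -
    have "(`) g \<circ> (`) h = (`) (g \<circ> h)" by (auto simp: image_comp)
    then show ?thesis using bij_betw_comp_iff[OF bij, of "(`) g" B] by simp
  qed
  ultimately show ?thesis unfolding cx_iso_def by blast
qed

lemma cx_iso_image:
  assumes "inj_on h (vertices A)"
  shows "cx_iso h A ((`) h ` A)"
proof -
  have "inj_on ((`) h) (Pow (vertices A))" by (rule inj_on_image_Pow[OF assms])
  then have "inj_on ((`) h) A" by (rule inj_on_subset) (auto dest: face_subset_vertices)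
  then show ?thesis using assms unfolding cx_iso_def bij_betw_def by blast
qed

lemma cx_iso_image_iff:
  assumes inj: "inj_on h (vertices A)" and g: "\<And>x. x \<in> vertices A \<Longrightarrow> g (h x) = f x"
  shows "cx_iso g ((`) h ` A) B \<longleftrightarrow> cx_iso f A B"
proof -
  have "cx_iso g ((`) h ` A) B \<longleftrightarrow> cx_iso (g \<circ> h) A B"
    by (rule cx_iso_comp_iff[OF cx_iso_image[OF inj]])
  also have "\<dots> \<longleftrightarrow> cx_iso f A B"
    using g by (intro cx_iso_cong) auto
  finally show ?thesis .
qed

lemma cx_iso_restrict:
  assumes "cx_iso f A B"
  shows "cx_iso f {t \<in> A. f ` t \<subseteq> Q} (induced B Q)"
proof -
  have "inj_on f (vertices A)" and bij: "bij_betw ((`) f) A B"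
    using assms unfolding cx_iso_def by blast+
  moreover have "vertices {t \<in> A. f ` t \<subseteq> Q} \<subseteq> vertices A"
    unfolding vertices_def by blast
  moreover have "bij_betw ((`) f) {t \<in> A. f ` t \<subseteq> Q} (induced B Q)"
    using bij unfolding bij_betw_def inj_on_def induced_def by auto
  ultimately show ?thesis unfolding cx_iso_def by (blast intro: inj_on_subset)
qed

section \<open>Trivial covers and relabelling\<close>

definition trivial_cover :: "'b set set \<Rightarrow> 'v set set \<Rightarrow> ('b \<Rightarrow> 'v) \<Rightarrow> nat \<Rightarrow> bool" where
  "trivial_cover Y K f l \<longleftrightarrow> finite (components Y) \<and> card (components Y) = l \<and>
     (\<forall>C\<in>components Y. cx_iso f (induced Y C) K)"

lemma simplicial_complex_image:
  assumes "simplicial_complex Y"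
  shows "simplicial_complex ((`) h ` Y)"
  unfolding simplicial_complex_def
proof (intro conjI ballI allI impI)
  fix t' assume "t' \<in> (`) h ` Y"
  then obtain t where "t \<in> Y" "t' = h ` t" by blast
  then show "finite t'" using simplicial_complex_finite[OF assms] by simp
next
  fix t' u assume "t' \<in> (`) h ` Y" "u \<subseteq> t'"
  then obtain t where t: "t \<in> Y" "t' = h ` t" by blast
  then have "u = h ` {x \<in> t. h x \<in> u}" using \<open>u \<subseteq> t'\<close> by auto
  moreover have "{x \<in> t. h x \<in> u} \<in> Y" by (rule simplicial_complex_subset[OF assms t(1)]) simp
  ultimately show "u \<in> (`) h ` Y" by (rule image_eqI)
qed

lemma vertices_image: "vertices ((`) h ` Y) = h ` vertices Y"
  unfolding vertices_def by blast

lemma link_image: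
  assumes inj: "inj_on h (vertices Y)" and y: "y \<in> vertices Y"
  shows "link ((`) h ` Y) {h y} = (`) h ` link Y {y}"
proof -
  have diff: "h ` (t - {y}) = h ` t - {h y}" if "t \<in> Y" for t
  proof -
    have "t - {y} \<subseteq> vertices Y" using face_subset_vertices[OF that] by blast
    then show ?thesis using inj_on_image_set_diff[OF inj, of t "{y}"] y by simp
  qed
  have mem: "h y \<in> h ` t \<longleftrightarrow> y \<in> t" if "t \<in> Y" for t
    using inj_on_image_mem_iff[OF inj y face_subset_vertices[OF that]] .
  have "{t' \<in> (`) h ` Y. {h y} \<subseteq> t'} = (`) h ` {t \<in> Y. {y} \<subseteq> t}"
    using mem by auto
  then have "link ((`) h ` Y) {h y} = (\<lambda>t. h ` t - {h y}) ` {t \<in> Y. {y} \<subseteq> t}"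
    unfolding link_eq_image by (simp add: image_image)
  also have "\<dots> = (\<lambda>t. h ` (t - {y})) ` {t \<in> Y. {y} \<subseteq> t}"
    using diff by simp
  finally show ?thesis unfolding link_eq_image by (simp add: image_image)
qed

lemma induced_image:
  assumes inj: "inj_on h (vertices Y)" and C: "C \<subseteq> vertices Y"
  shows "induced ((`) h ` Y) (h ` C) = (`) h ` induced Y C"
proof -
  have "h ` t \<subseteq> h ` C \<longleftrightarrow> t \<subseteq> C" if "t \<in> Y" for t
    using inj_on_image_mem_iff[OF inj _ C] face_subset_vertices[OF that] by blast
  then show ?thesis unfolding induced_def by auto
qed

lemma l_cover_image:
  assumes cover: "l_cover Y K f l" and inj: "inj_on h (vertices Y)"
    and g: "\<And>x. x \<in> vertices Y \<Longrightarrow> g (h x) = f x"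
  shows "l_cover ((`) h ` Y) K g l"
proof -
  have scY: "simplicial_complex Y" and scK: "simplicial_complex K"
    and faces: "\<forall>t\<in>Y. f ` t \<in> K" and onto: "f ` vertices Y = vertices K"
    and links: "\<forall>y\<in>vertices Y. cx_iso f (link Y {y}) (link K {f y})"
    and fibres: "\<forall>v\<in>vertices K. finite {y \<in> vertices Y. f y = v} \<and> card {y \<in> vertices Y. f y = v} = l"
    using cover unfolding l_cover_def covering_map_def by auto
  have gh: "g ` h ` t = f ` t" if "t \<subseteq> vertices Y" for t
    unfolding image_image using g that by (intro image_cong) auto
  have faces': "\<forall>t'\<in>(`) h ` Y. g ` t' \<in> K"
  proof
    fix t' assume "t' \<in> (`) h ` Y"
    then obtain t where "t \<in> Y" "t' = h ` t" by blast
    then show "g ` t' \<in> K" using faces gh[OF face_subset_vertices] by simp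
  qed
  have onto': "g ` vertices ((`) h ` Y) = vertices K"
    unfolding vertices_image using gh onto by simp
  have links': "cx_iso g (link ((`) h ` Y) {h y}) (link K {g (h y)})" if y: "y \<in> vertices Y" for y
  proof -
    have "vertices (link Y {y}) \<subseteq> vertices Y" by (rule vertices_link_subset)
    then have "cx_iso g ((`) h ` link Y {y}) (link K {f y}) \<longleftrightarrow> cx_iso f (link Y {y}) (link K {f y})"
      using inj g by (intro cx_iso_image_iff) (auto intro: inj_on_subset)
    then show ?thesis unfolding link_image[OF inj y] g[OF y] using links y by blast
  qed
  have fibres': "finite {y' \<in> vertices ((`) h ` Y). g y' = v} \<and> card {y' \<in> vertices ((`) h ` Y). g y' = v} = l"
    if v: "v \<in> vertices K" for v
  proof -
    have "{y' \<in> vertices ((`) h ` Y). g y' = v} = h ` {y \<in> vertices Y. f y = v}"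
      unfolding vertices_image using g by auto
    moreover have "inj_on h {y \<in> vertices Y. f y = v}" using inj by (rule inj_on_subset) blast
    ultimately show ?thesis using fibres v by (simp add: card_image)
  qed
  have links'': "\<forall>y'\<in>vertices ((`) h ` Y). cx_iso g (link ((`) h ` Y) {y'}) (link K {g y'})"
    unfolding vertices_image using links' by blast
  show ?thesis
    unfolding l_cover_def covering_map_def
    using simplicial_complex_image[OF scY] scK faces' onto' links'' fibres' by blast
qed

lemma trivial_cover_image_iff:
  assumes scY: "simplicial_complex Y" and inj: "inj_on h (vertices Y)"
    and g: "\<And>x. x \<in> vertices Y \<Longrightarrow> g (h x) = f x"
  shows "trivial_cover ((`) h ` Y) K g l \<longleftrightarrow> trivial_cover Y K f l"
proof -
  have comps: "components ((`) h ` Y) = (`) h ` components Y"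
    by (rule cx_iso_components[OF cx_iso_image[OF inj]])
  have "inj_on ((`) h) (Pow (vertices Y))" by (rule inj_on_image_Pow[OF inj])
  then have inj_comps: "inj_on ((`) h) (components Y)"
    by (rule inj_on_subset) (auto dest: components_subset_vertices)
  have "cx_iso g (induced ((`) h ` Y) (h ` C)) K \<longleftrightarrow> cx_iso f (induced Y C) K"
    if C: "C \<in> components Y" for C
  proof -
    have "vertices (induced Y C) \<subseteq> vertices Y" using vertices_induced[OF scY] by blast
    then have "cx_iso g ((`) h ` induced Y C) K \<longleftrightarrow> cx_iso f (induced Y C) K"
      using inj g by (intro cx_iso_image_iff) (auto intro: inj_on_subset)
    then show ?thesis unfolding induced_image[OF inj components_subset_vertices[OF C]] .
  qed
  then show ?thesis
    unfolding trivial_cover_def comps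
    using finite_image_iff[OF inj_comps] card_image[OF inj_comps] by auto
qed

lemma fibrewise_injection_nat:
  assumes "\<And>v. v \<in> f ` V \<Longrightarrow> finite {y \<in> V. f y = v}"
  obtains h :: "'b \<Rightarrow> 'v \<times> nat" where "inj_on h V" "\<And>y. fst (h y) = f y"
proof -
  define e where "e v = (SOME g :: 'b \<Rightarrow> nat. inj_on g {y \<in> V. f y = v})" for v
  have e: "inj_on (e v) {y \<in> V. f y = v}" if v: "v \<in> f ` V" for v
  proof -
    obtain g :: "'b \<Rightarrow> nat" where "inj_on g {y \<in> V. f y = v}"
      using finite_imp_inj_to_nat_seg[OF assms[OF v]] by metis
    then show ?thesis
      using someI[where P = "\<lambda>g. inj_on g {y \<in> V. f y = v}"] unfolding e_def by blast
  qed
  have "inj_on (\<lambda>y. (f y, e (f y) y)) V"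
  proof (rule inj_onI)
    fix x y assume "x \<in> V" "y \<in> V" "(f x, e (f x) x) = (f y, e (f y) y)"
    then show "x = y" using e[of "f x"] by (auto dest: inj_onD)
  qed
  then show ?thesis using that[of "\<lambda>y. (f y, e (f y) y)"] by simp
qed

text \<open>The definition of simple connectivity only speaks about covers with vertex type
  \<open>'v \<times> nat\<close>; relabelling the vertices fibrewise makes it apply to every cover.\<close>

lemma simply_connected_trivial_cover:
  fixes K :: "'v set set" and Y :: "'b set set"
  assumes sc: "simply_connected K" and cover: "l_cover Y K f l"
  shows "trivial_cover Y K f l"
proof -
  have scY: "simplicial_complex Y" and onto: "f ` vertices Y = vertices K"
    and fibres: "\<forall>v\<in>vertices K. finite {y \<in> vertices Y. f y = v}"
    using cover unfolding l_cover_def covering_map_def by auto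
  obtain h :: "'b \<Rightarrow> 'v \<times> nat" where inj: "inj_on h (vertices Y)" and h: "\<And>y. fst (h y) = f y"
    using fibrewise_injection_nat[of f "vertices Y"] fibres onto by metis
  have "l_cover ((`) h ` Y) K fst l" by (rule l_cover_image[OF cover inj, of fst, OF h])
  then have "trivial_cover ((`) h ` Y) K fst l"
    using sc unfolding simply_connected_def trivial_cover_def by blast
  then show ?thesis using trivial_cover_image_iff[OF scY inj, of fst, OF h] by blast
qed

section \<open>Restricting covers to induced subcomplexes\<close>

definition cx_preimage :: "'b set set \<Rightarrow> ('b \<Rightarrow> 'v) \<Rightarrow> 'v set \<Rightarrow> 'b set set" where
  "cx_preimage Y f Q = induced Y {y \<in> vertices Y. f y \<in> Q}"

lemma simplicial_complex_cx_preimage: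
  "simplicial_complex Y \<Longrightarrow> simplicial_complex (cx_preimage Y f Q)"
  unfolding cx_preimage_def by (rule simplicial_complex_induced)

lemma vertices_cx_preimage:
  "simplicial_complex Y \<Longrightarrow> vertices (cx_preimage Y f Q) = {y \<in> vertices Y. f y \<in> Q}"
  unfolding cx_preimage_def by (auto simp: vertices_induced)

lemma cx_preimage_cx_preimage:
  assumes "simplicial_complex Y"
  shows "cx_preimage (cx_preimage Y f Q) f Q' = cx_preimage Y f (Q \<inter> Q')"
proof -
  have "{y \<in> vertices Y. f y \<in> Q} \<inter> {y \<in> vertices (cx_preimage Y f Q). f y \<in> Q'} =
      {y \<in> vertices Y. f y \<in> Q \<inter> Q'}"
    unfolding vertices_cx_preimage[OF assms] by blast
  then show ?thesis
    unfolding cx_preimage_def[of "cx_preimage Y f Q"] by (simp add: cx_preimage_def)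
qed

lemma link_cx_preimage:
  assumes "y \<in> {y \<in> vertices Y. f y \<in> Q}"
  shows "link (cx_preimage Y f Q) {y} = {u \<in> link Y {y}. f ` u \<subseteq> Q}"
proof -
  have sub: "u \<subseteq> {y \<in> vertices Y. f y \<in> Q} \<longleftrightarrow> f ` u \<subseteq> Q" if "u \<in> link Y {y}" for u
    using face_subset_vertices[OF that] vertices_link_subset[of Y y] by blast
  have "link (cx_preimage Y f Q) {y} = induced (link Y {y}) {y \<in> vertices Y. f y \<in> Q}"
    unfolding cx_preimage_def by (rule link_induced[OF assms])
  also have "\<dots> = {u \<in> link Y {y}. f ` u \<subseteq> Q}"
    unfolding induced_def using sub by (intro Collect_cong) blast
  finally show ?thesis .
qed

lemma cx_iso_induced_Int_preimage:
  assumes "cx_iso f (induced Z C) B"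
  shows "cx_iso f (induced Z (C \<inter> {y \<in> vertices Z. f y \<in> Q})) (induced B Q)"
proof -
  have "induced Z (C \<inter> {y \<in> vertices Z. f y \<in> Q}) = {t \<in> induced Z C. f ` t \<subseteq> Q}"
    unfolding induced_def using face_subset_vertices by blast
  then show ?thesis using cx_iso_restrict[OF assms] by simp
qed

lemma l_cover_cx_preimage:
  assumes cover: "l_cover Y K f l" and Q: "Q \<subseteq> vertices K"
  shows "l_cover (cx_preimage Y f Q) (induced K Q) f l"
proof -
  have scY: "simplicial_complex Y" and scK: "simplicial_complex K"
    and faces: "\<forall>t\<in>Y. f ` t \<in> K" and onto: "f ` vertices Y = vertices K"
    and links: "\<forall>y\<in>vertices Y. cx_iso f (link Y {y}) (link K {f y})"
    and fibres: "\<forall>v\<in>vertices K. finite {y \<in> vertices Y. f y = v} \<and> card {y \<in> vertices Y. f y = v} = l"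
    using cover unfolding l_cover_def covering_map_def by auto
  define P where "P = {y \<in> vertices Y. f y \<in> Q}"
  have vP: "vertices (cx_preimage Y f Q) = P"
    unfolding P_def by (rule vertices_cx_preimage[OF scY])
  have vQ: "vertices (induced K Q) = Q" using vertices_induced[OF scK] Q by blast
  have onto': "f ` P = Q"
  proof
    show "f ` P \<subseteq> Q" unfolding P_def by blast
    show "Q \<subseteq> f ` P"
    proof
      fix q assume "q \<in> Q"
      then obtain y where "y \<in> vertices Y" "q = f y" using onto Q by blast
      then show "q \<in> f ` P" using \<open>q \<in> Q\<close> unfolding P_def by blast
    qed
  qed
  have faces': "\<forall>t\<in>cx_preimage Y f Q. f ` t \<in> induced K Q"
    using faces unfolding cx_preimage_def induced_def by blast
  have links': "cx_iso f (link (cx_preimage Y f Q) {y}) (link (induced K Q) {f y})" if y: "y \<in> P" for y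
  proof -
    have "y \<in> vertices Y" "f y \<in> Q" using y unfolding P_def by blast+
    then show ?thesis
      unfolding link_cx_preimage[OF y[unfolded P_def]] link_induced[OF \<open>f y \<in> Q\<close>]
      using links cx_iso_restrict by blast
  qed
  have "covering_map (cx_preimage Y f Q) (induced K Q) f"
    unfolding covering_map_def vP vQ
    using simplicial_complex_cx_preimage[OF scY] simplicial_complex_induced[OF scK]
      faces' onto' links' by blast
  moreover have "{y \<in> P. f y = v} = {y \<in> vertices Y. f y = v}" if "v \<in> Q" for v
    using that unfolding P_def by blast
  ultimately show ?thesis
    unfolding l_cover_def vP vQ using fibres Q by auto
qed

lemma components_cx_preimage:
  assumes sc: "simplicial_complex Z" and sheets: "\<forall>C\<in>components Z. cx_iso f (induced Z C) B"
    and con: "cx_connected (induced B Q)"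
  defines "P \<equiv> {y \<in> vertices Z. f y \<in> Q}"
  shows "components (cx_preimage Z f Q) = (\<lambda>C. C \<inter> P) ` components Z"
    and "inj_on (\<lambda>C. C \<inter> P) (components Z)"
proof -
  have "cx_connected (induced Z (C \<inter> P))" if "C \<in> components Z" for C
    using cx_iso_connected[OF cx_iso_induced_Int_preimage con] sheets that unfolding P_def by blast
  from components_induced[OF sc this]
  show "components (cx_preimage Z f Q) = (\<lambda>C. C \<inter> P) ` components Z"
    and "inj_on (\<lambda>C. C \<inter> P) (components Z)"
    unfolding cx_preimage_def P_def by blast+
qed

lemma trivial_cover_cx_preimage:
  assumes sc: "simplicial_complex Z" and triv: "trivial_cover Z B f l"
    and con: "cx_connected (induced B Q)"
  shows "trivial_cover (cx_preimage Z f Q) (induced B Q) f l"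
proof -
  define P where "P = {y \<in> vertices Z. f y \<in> Q}"
  have sheets: "\<forall>C\<in>components Z. cx_iso f (induced Z C) B"
    using triv unfolding trivial_cover_def by blast
  note comps = components_cx_preimage[OF sc sheets con, folded P_def]
  have "cx_iso f (induced (cx_preimage Z f Q) (C \<inter> P)) (induced B Q)" if "C \<in> components Z" for C
  proof -
    have "induced (cx_preimage Z f Q) (C \<inter> P) = induced Z (C \<inter> P)"
      unfolding cx_preimage_def P_def by (simp add: Int_assoc Int_commute Int_left_commute)
    then show ?thesis using cx_iso_induced_Int_preimage[of f Z C B Q] sheets that unfolding P_def by simp
  qed
  then show ?thesis
    using triv comps card_image[OF comps(2)] unfolding trivial_cover_def by auto
qed

lemma induced_component_subset_iff:
  assumes sc: "simplicial_complex Z"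
    and comps: "components (induced Z P) = (\<lambda>C. C \<inter> P) ` components Z"
    and D: "D \<in> components (induced Z P)" and C: "C \<in> components Z"
  shows "induced (induced Z P) D \<subseteq> induced Z C \<longleftrightarrow> D = C \<inter> P"
proof
  assume sub: "induced (induced Z P) D \<subseteq> induced Z C"
  obtain C' where C': "C' \<in> components Z" "D = C' \<inter> P" using D comps by blast
  obtain y where y: "y \<in> D" using components_nonempty[OF D] by blast
  have "{y} \<in> induced Z P"
    using singleton_face[OF simplicial_complex_induced[OF sc]] components_subset_vertices[OF D] y
    by blast
  then have "{y} \<in> induced Z C" using sub y unfolding induced_def by blast
  then have "y \<in> C" unfolding induced_def by blast
  moreover have "y \<in> C'" using y C'(2) by blast
  ultimately have "C' = C" by (rule components_disjoint[OF C'(1) C, rotated])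
  then show "D = C \<inter> P" using C'(2) by blast
next
  assume "D = C \<inter> P"
  then show "induced (induced Z P) D \<subseteq> induced Z C" unfolding induced_def by blast
qed

lemma components_induced_permutation:
  assumes sc: "simplicial_complex Z"
    and comps: "components (induced Z P) = (\<lambda>C. C \<inter> P) ` components Z"
    and inj: "inj_on (\<lambda>C. C \<inter> P) (components Z)"
    and Lr: "bij_betw Lr {..<l} (components Z)"
    and Ls: "bij_betw Ls {..<l} (components (induced Z P))"
  shows "\<exists>\<pi>. bij_betw \<pi> {..<l} {..<l} \<and>
    (\<forall>i<l. \<forall>j<l. induced (induced Z P) (Ls i) \<subseteq> induced Z (Lr j) \<longleftrightarrow> \<pi> i = j)"
proof -
  have restrict: "bij_betw (\<lambda>C. C \<inter> P) (components Z) (components (induced Z P))"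
    using inj comps unfolding bij_betw_def by blast
  define \<rho> where "\<rho> = the_inv_into (components Z) (\<lambda>C. C \<inter> P)"
  define \<pi> where "\<pi> = the_inv_into {..<l} Lr \<circ> \<rho> \<circ> Ls"
  have \<rho>: "bij_betw \<rho> (components (induced Z P)) (components Z)"
    unfolding \<rho>_def by (rule bij_betw_the_inv_into[OF restrict])
  have \<pi>: "bij_betw \<pi> {..<l} {..<l}"
    unfolding \<pi>_def by (rule bij_betw_trans[OF Ls bij_betw_trans[OF \<rho> bij_betw_the_inv_into[OF Lr]]])
  moreover have "induced (induced Z P) (Ls i) \<subseteq> induced Z (Lr j) \<longleftrightarrow> \<pi> i = j"
    if ij: "i < l" "j < l" for i j
  proof -
    have LsD: "Ls i \<in> components (induced Z P)" using bij_betwE[OF Ls] ij(1) by blast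
    have LrC: "Lr j \<in> components Z" using bij_betwE[OF Lr] ij(2) by blast
    have \<rho>D: "\<rho> (Ls i) \<in> components Z" using bij_betwE[OF \<rho>] LsD by blast
    have \<rho>D_Int: "\<rho> (Ls i) \<inter> P = Ls i"
      unfolding \<rho>_def by (rule f_the_inv_into_f_bij_betw[OF restrict LsD])
    have Lr\<pi>: "Lr (\<pi> i) = \<rho> (Ls i)"
      unfolding \<pi>_def using f_the_inv_into_f_bij_betw[OF Lr \<rho>D] by simp
    have "induced (induced Z P) (Ls i) \<subseteq> induced Z (Lr j) \<longleftrightarrow> Ls i = Lr j \<inter> P"
      by (rule induced_component_subset_iff[OF sc comps LsD LrC])
    also have "\<dots> \<longleftrightarrow> Lr j = \<rho> (Ls i)"
      using inj_onD[OF inj _ LrC \<rho>D] \<rho>D_Int by auto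
    also have "\<dots> \<longleftrightarrow> \<pi> i = j"
      using Lr\<pi> inj_onD[OF bij_betw_imp_inj_on[OF Lr], of "\<pi> i" j] bij_betwE[OF \<pi>] ij by auto
    finally show ?thesis .
  qed
  ultimately show ?thesis by blast
qed

section \<open>Faces complexes of links\<close>

lemma link_iff: "s \<in> link X r \<longleftrightarrow> s \<inter> r = {} \<and> s \<union> r \<in> X"
proof
  assume "s \<in> link X r"
  then show "s \<inter> r = {} \<and> s \<union> r \<in> X" unfolding link_def by (auto simp: Un_absorb2)
next
  assume "s \<inter> r = {} \<and> s \<union> r \<in> X"
  then have "s = (s \<union> r) - r" "r \<subseteq> s \<union> r" "s \<union> r \<in> X" by auto
  then show "s \<in> link X r" unfolding link_def by blast
qed

lemma link_empty [simp]: "link X {} = X"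
  unfolding link_def by simp

lemma vertices_faces_complex_link:
  assumes sc: "simplicial_complex X"
  shows "vertices (faces_complex d1 (link X r)) = {s. card s = d1 + 1 \<and> s \<inter> r = {} \<and> s \<union> r \<in> X}"
proof
  show "vertices (faces_complex d1 (link X r)) \<subseteq> {s. card s = d1 + 1 \<and> s \<inter> r = {} \<and> s \<union> r \<in> X}"
    unfolding vertices_def faces_complex_def link_iff by blast
  show "{s. card s = d1 + 1 \<and> s \<inter> r = {} \<and> s \<union> r \<in> X} \<subseteq> vertices (faces_complex d1 (link X r))"
  proof
    fix s assume s: "s \<in> {s. card s = d1 + 1 \<and> s \<inter> r = {} \<and> s \<union> r \<in> X}"
    then have "s \<in> link X r" unfolding link_iff by blast
    then have "{s} \<in> faces_complex d1 (link X r)" using s unfolding faces_complex_def by simp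
    then show "s \<in> vertices (faces_complex d1 (link X r))" unfolding vertices_def by blast
  qed
qed

lemma vertices_faces_complex_link_antimono:
  assumes "simplicial_complex X" "r \<subseteq> r'"
  shows "vertices (faces_complex d1 (link X r')) \<subseteq> vertices (faces_complex d1 (link X r))"
proof -
  have "s \<union> r \<in> X" if "s \<union> r' \<in> X" for s
    using simplicial_complex_subset[OF assms(1) that] assms(2) by blast
  then show ?thesis unfolding vertices_faces_complex_link[OF assms(1)] using assms(2) by blast
qed

lemma clique_complex_Un:
  assumes clique: "clique_complex X" and A: "A \<in> X" and B: "B \<in> X"
    and edges: "\<And>a b. a \<in> A \<Longrightarrow> b \<in> B \<Longrightarrow> {a, b} \<in> X"
  shows "A \<union> B \<in> X"
proof -
  have sc: "simplicial_complex X" using clique unfolding clique_complex_def by blast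
  have sub: "t \<in> X" if "t \<subseteq> A \<or> t \<subseteq> B" for t
    using that simplicial_complex_subset[OF sc A] simplicial_complex_subset[OF sc B] by blast
  have "finite (A \<union> B)" using simplicial_complex_finite[OF sc] A B by simp
  moreover have "\<forall>v\<in>A \<union> B. {v} \<in> X" using sub by simp
  moreover have "{u, v} \<in> X" if "u \<in> A \<union> B" "v \<in> A \<union> B" for u v
  proof (cases "{u, v} \<subseteq> A \<or> {u, v} \<subseteq> B")
    case True
    then show ?thesis by (rule sub)
  next
    case False
    then have "u \<in> A \<and> v \<in> B \<or> u \<in> B \<and> v \<in> A" using that by blast
    then show ?thesis using edges by (metis insert_commute)
  qed
  ultimately show ?thesis
    using clique[unfolded clique_complex_def, THEN conjunct2, rule_format, of "A \<union> B"] by blast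
qed

text \<open>This is where the clique property enters: pairwise disjoint \<open>d\<^sub>1\<close>-faces, each joinable
  to \<open>r\<close>, whose union is a face can be joined to \<open>r\<close> simultaneously.\<close>

lemma faces_complex_link_eq_induced:
  assumes clique: "clique_complex X" and r: "r \<in> X"
  shows "faces_complex d1 (link X r) =
    induced (faces_complex d1 X) (vertices (faces_complex d1 (link X r)))"
proof -
  have sc: "simplicial_complex X" using clique unfolding clique_complex_def by blast
  note V = vertices_faces_complex_link[OF sc, of d1 r]
  show ?thesis
  proof
    show "faces_complex d1 (link X r) \<subseteq> induced (faces_complex d1 X) (vertices (faces_complex d1 (link X r)))"
    proof
      fix U assume U: "U \<in> faces_complex d1 (link X r)"
      have "t \<in> X" if "t \<in> link X r" for t
        using that simplicial_complex_subset[OF sc] unfolding link_iff by blast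
      then have "U \<in> faces_complex d1 X" using U unfolding faces_complex_def by blast
      moreover have "U \<subseteq> vertices (faces_complex d1 (link X r))"
        using U face_subset_vertices by blast
      ultimately show "U \<in> induced (faces_complex d1 X) (vertices (faces_complex d1 (link X r)))"
        unfolding induced_def by blast
    qed
    show "induced (faces_complex d1 X) (vertices (faces_complex d1 (link X r))) \<subseteq> faces_complex d1 (link X r)"
    proof
      fix U assume U: "U \<in> induced (faces_complex d1 X) (vertices (faces_complex d1 (link X r)))"
      then have UX: "U \<in> faces_complex d1 X" and Ur: "\<forall>s\<in>U. s \<inter> r = {} \<and> s \<union> r \<in> X"
        unfolding induced_def V by auto
      have "\<Union>U \<in> X" using UX unfolding faces_complex_def by blast
      have "\<Union>U \<union> r \<in> X"
      proof (rule clique_complex_Un[OF clique \<open>\<Union>U \<in> X\<close> r])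
        fix a b assume "a \<in> \<Union>U" "b \<in> r"
        then obtain s where "s \<in> U" "a \<in> s" by blast
        then show "{a, b} \<in> X"
          using Ur simplicial_complex_subset[OF sc, of "s \<union> r" "{a, b}"] \<open>b \<in> r\<close> by blast
      qed
      then have "\<Union>U \<in> link X r" using Ur unfolding link_iff by blast
      moreover have "\<forall>s\<in>U. s \<in> link X r" using Ur unfolding link_iff by blast
      ultimately show "U \<in> faces_complex d1 (link X r)" using UX unfolding faces_complex_def by blast
    qed
  qed
qed

lemma faces_complex_link_induced:
  assumes clique: "clique_complex X" and "r \<subseteq> s" "s \<in> X"
  shows "induced (faces_complex d1 (link X r)) (vertices (faces_complex d1 (link X s))) =
    faces_complex d1 (link X s)"
proof -
  have sc: "simplicial_complex X" using clique unfolding clique_complex_def by blast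
  have "r \<in> X" using simplicial_complex_subset[OF sc] assms(2,3) by blast
  have "vertices (faces_complex d1 (link X s)) \<subseteq> vertices (faces_complex d1 (link X r))"
    by (rule vertices_faces_complex_link_antimono[OF sc assms(2)])
  then show ?thesis
    by (subst (1 2) faces_complex_link_eq_induced[OF clique])
      (use \<open>r \<in> X\<close> assms(3) in \<open>auto simp: Int_absorb1\<close>)
qed

section \<open>Sheets over links\<close>

lemma trivial_cover_link_preimage:
  assumes clique: "clique_complex X" and wc: "well_connected d1 X"
    and cover: "l_cover Y (faces_complex d1 X) \<nu> l"
    and r: "r \<in> X" "r \<noteq> {}" "card r \<le> d1 + 1"
  shows "trivial_cover (cx_preimage Y \<nu> (vertices (faces_complex d1 (link X r))))
    (faces_complex d1 (link X r)) \<nu> l"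
proof -
  let ?F = "\<lambda>r. faces_complex d1 (link X r)"
  have sc: "simplicial_complex X" using clique unfolding clique_complex_def by blast
  have scY: "simplicial_complex Y" using cover unfolding l_cover_def covering_map_def by blast
  obtain v where "v \<in> r" using r(2) by blast
  then have v: "{v} \<subseteq> r" "{v} \<in> X" using simplicial_complex_subset[OF sc r(1)] by auto
  have "vertices (?F {v}) \<subseteq> vertices (?F {})"
    by (rule vertices_faces_complex_link_antimono[OF sc]) simp
  then have "l_cover (cx_preimage Y \<nu> (vertices (?F {v}))) (induced (?F {}) (vertices (?F {v}))) \<nu> l"
    unfolding link_empty by (rule l_cover_cx_preimage[OF cover])
  then have "l_cover (cx_preimage Y \<nu> (vertices (?F {v}))) (?F {v}) \<nu> l"
    unfolding faces_complex_link_induced[OF clique empty_subsetI v(2)] .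
  moreover have "simply_connected (?F {v})" using wc v(2) unfolding well_connected_def by blast
  ultimately have "trivial_cover (cx_preimage Y \<nu> (vertices (?F {v}))) (?F {v}) \<nu> l"
    using simply_connected_trivial_cover by blast
  moreover have "cx_connected (induced (?F {v}) (vertices (?F r)))"
    using wc r faces_complex_link_induced[OF clique v(1) r(1)] unfolding well_connected_def by simp
  ultimately have "trivial_cover (cx_preimage (cx_preimage Y \<nu> (vertices (?F {v}))) \<nu> (vertices (?F r)))
      (induced (?F {v}) (vertices (?F r))) \<nu> l"
    by (intro trivial_cover_cx_preimage simplicial_complex_cx_preimage scY)
  moreover have "vertices (?F r) \<subseteq> vertices (?F {v})"
    by (rule vertices_faces_complex_link_antimono[OF sc v(1)])
  ultimately show ?thesis
    by (simp add: cx_preimage_cx_preimage[OF scY] Int_absorb1 faces_complex_link_induced[OF clique v(1) r(1)])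
qed

lemma link_components_permutation:
  assumes clique: "clique_complex X" and wc: "well_connected d1 X"
    and cover: "l_cover Y (faces_complex d1 X) \<nu> l"
    and rs: "r \<noteq> {}" "r \<subseteq> s" "s \<in> X" "card s \<le> d1 + 1"
  defines "Z \<equiv> \<lambda>r. cx_preimage Y \<nu> (vertices (faces_complex d1 (link X r)))"
  assumes Lr: "bij_betw Lr {..<l} (components (Z r))"
    and Ls: "bij_betw Ls {..<l} (components (Z s))"
  shows "\<exists>\<pi>. bij_betw \<pi> {..<l} {..<l} \<and>
    (\<forall>i<l. \<forall>j<l. induced (Z s) (Ls i) \<subseteq> induced (Z r) (Lr j) \<longleftrightarrow> \<pi> i = j)"
proof -
  let ?F = "\<lambda>r. faces_complex d1 (link X r)"
  define P where "P = {y \<in> vertices (Z r). \<nu> y \<in> vertices (?F s)}"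
  have sc: "simplicial_complex X" using clique unfolding clique_complex_def by blast
  have scY: "simplicial_complex Y" using cover unfolding l_cover_def covering_map_def by blast
  have scZ: "simplicial_complex (Z r)" unfolding Z_def by (rule simplicial_complex_cx_preimage[OF scY])
  have r: "r \<in> X" "card r \<le> d1 + 1"
    using simplicial_complex_subset[OF sc rs(3,2)]
      card_mono[OF simplicial_complex_finite[OF sc rs(3)] rs(2)] rs(4) by auto
  have "trivial_cover (Z r) (?F r) \<nu> l"
    unfolding Z_def by (rule trivial_cover_link_preimage[OF clique wc cover r(1) rs(1) r(2)])
  then have sheets: "\<forall>C\<in>components (Z r). cx_iso \<nu> (induced (Z r) C) (?F r)"
    unfolding trivial_cover_def by blast
  have "cx_connected (induced (?F r) (vertices (?F s)))"
    using wc rs(3,4) faces_complex_link_induced[OF clique rs(2,3)] unfolding well_connected_def by simp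
  note comps = components_cx_preimage[OF scZ sheets this, folded P_def]
  have "cx_preimage (Z r) \<nu> (vertices (?F s)) = Z s"
    using vertices_faces_complex_link_antimono[OF sc rs(2)]
    unfolding Z_def by (simp add: cx_preimage_cx_preimage[OF scY] Int_absorb1)
  then have Zs: "induced (Z r) P = Z s" unfolding cx_preimage_def P_def .
  show ?thesis
    using components_induced_permutation[OF scZ _ comps(2) Lr] comps(1) Ls
    unfolding Zs cx_preimage_def P_def[symmetric] by blast
qed

theorem claim5p1:
  fixes X :: "'a set set" and d d1 l :: nat
    and Y :: "'b set set" and \<nu> :: "'b \<Rightarrow> 'a set"
  assumes "clique_complex X" and "has_dim X d" and "3 * d1 + 2 \<le> d"
    and "well_connected d1 X"
    and "l_cover Y (faces_complex d1 X) \<nu> l"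
  defines "Z \<equiv> \<lambda>r. induced Y {y \<in> vertices Y. \<nu> y \<in> vertices (faces_complex d1 (link X r))}"
  shows "(\<forall>r\<in>X. r \<noteq> {} \<and> card r \<le> d1 + 1 \<longrightarrow>
            finite (components (Z r)) \<and> card (components (Z r)) = l \<and>
            (\<forall>C\<in>components (Z r). cx_iso \<nu> (induced (Z r) C) (faces_complex d1 (link X r))))
       \<and> (\<forall>r s. r \<noteq> {} \<and> r \<subseteq> s \<and> s \<in> X \<and> card s \<le> d1 + 1 \<longrightarrow>
            (\<forall>Lr Ls. bij_betw Lr {..<l} (components (Z r)) \<and> bij_betw Ls {..<l} (components (Z s)) \<longrightarrow>
              (\<exists>\<pi>. bij_betw \<pi> {..<l} {..<l} \<and>
                 (\<forall>i<l. \<forall>j<l. induced (Z s) (Ls i) \<subseteq> induced (Z r) (Lr j) \<longleftrightarrow> \<pi> i = j))))"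
proof -
  have Z: "Z = (\<lambda>r. cx_preimage Y \<nu> (vertices (faces_complex d1 (link X r))))"
    unfolding Z_def cx_preimage_def ..
  have "\<forall>r\<in>X. r \<noteq> {} \<and> card r \<le> d1 + 1 \<longrightarrow> trivial_cover (Z r) (faces_complex d1 (link X r)) \<nu> l"
    unfolding Z using trivial_cover_link_preimage[OF assms(1,4,5)] by blast
  moreover have "\<forall>r s. r \<noteq> {} \<and> r \<subseteq> s \<and> s \<in> X \<and> card s \<le> d1 + 1 \<longrightarrow>
      (\<forall>Lr Ls. bij_betw Lr {..<l} (components (Z r)) \<and> bij_betw Ls {..<l} (components (Z s)) \<longrightarrow>
        (\<exists>\<pi>. bij_betw \<pi> {..<l} {..<l} \<and>
          (\<forall>i<l. \<forall>j<l. induced (Z s) (Ls i) \<subseteq> induced (Z r) (Lr j) \<longleftrightarrow> \<pi> i = j)))"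
    unfolding Z by (intro allI impI, elim conjE, rule link_components_permutation[OF assms(1,4,5)])
  ultimately show ?thesis
    unfolding trivial_cover_def by (rule conjI)
qed

end
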